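(* Let $S$ be a Damek–Ricci space with $\mathfrak{s}=\mathfrak{a}\oplus\mathfrak{v}\oplus\mathfrak{z}$. Let $\Sigma$ be a totally geodesic subgroup of $S$ with $T_e\Sigma=\mathfrak{a}\oplus\mathfrak{v}'\oplus\mathfrak{z}'$, where $\mathfrak{v}'\subseteq\mathfrak{v}$ and $\mathfrak{z}'\subseteq\mathfrak{z}$. Let $H$ be a closed subgroup of $S$ whose Lie algebra $\mathfrak{h}$ is orthogonal to $T_e\Sigma$, and let $\eta$ be a Killing vector field induced by the action of $H$ on $S$ by left translations. Write $\eta(e)=X+U$ with $U\in\mathfrak{v}$, $X\in\mathfrak{z}$. Then the following are equivalent: (i) $\langle\nabla_v\eta,w\rangle=0$ for all $v,w\in T_e\Sigma$; (ii) $J_X\mathfrak{v}'\perp\mathfrak{v}'$.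
   Context: Damek–Ricci space: let $\mathfrak{n}=\mathfrak{v}\oplus\mathfrak{z}$ be a real Lie algebra with inner product $\langle\cdot,\cdot\rangle$ such that $\mathfrak{v}\perp\mathfrak{z}$, $[\mathfrak{v},\mathfrak{v}]\subseteq\mathfrak{z}$, $[\mathfrak{v},\mathfrak{z}]=[\mathfrak{z},\mathfrak{z}]=0$; define $J_Z\in\mathrm{End}(\mathfrak{v})$ for $Z\in\mathfrak{z}$ by $\langle J_ZU,V\rangle=\langle[U,V],Z\rangle$, and assume $J_Z^2=-\langle Z,Z\rangle\mathrm{id}_{\mathfrak{v}}$. Let $\mathfrak{a}=\mathbb{R}A$, $\mathfrak{s}=\mathfrak{a}\oplus\mathfrak{n}$ with $[A,U]=\tfrac12U$ ($U\in\mathfrak{v}$), $[A,X]=X$ ($X\in\mathfrak{z}$), inner product extended with $A$ a unit vector orthogonal to $\mathfrak{n}$. $S$ is the simply connected Lie group with Lie algebra $\mathfrak{s}$ with the induced left-invariant metric, identity $e$, $T_eS=\mathfrak{s}$, Levi-Civita connection $\nabla$. The Killing field induced by $Y\in\mathfrak{h}$ under left translations is $p\mapsto\frac{d}{dt}\big|_{t=0}\exp(tY)p$ (the right-invariant extension of $Y$). *)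

theory Defs
  imports "HOL-Analysis.Analysis"
begin

text \<open>Damek-Ricci data: v and z are finite-dimensional inner product spaces (types 'v, 'z),
  br U V is the bracket [U,V] in z of U,V in v. The Lie algebra s = a + v + z and the
  group S are both modelled on real * 'v * 'z: the tangent vector (a,U,X) at e is aA+U+X;
  the point (t,V,Z) is the group element exp(V+Z) exp(tA) (S = N semidirect A).\<close>

definition J :: "('v::real_inner \<Rightarrow> 'v \<Rightarrow> 'z::real_inner) \<Rightarrow> 'z \<Rightarrow> 'v \<Rightarrow> 'v" where
  "J br Z U = (THE W. \<forall>V. inner W V = inner (br U V) Z)"

definition damek_ricci :: "('v::euclidean_space \<Rightarrow> 'v \<Rightarrow> 'z::euclidean_space) \<Rightarrow> bool" where
  "damek_ricci br \<longleftrightarrow> bilinear br \<and> (\<forall>U V. br U V = - br V U) \<and>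
     (\<forall>Z U. J br Z (J br Z U) = - (inner Z Z) *\<^sub>R U)"

type_synonym ('v, 'z) drpt = "real \<times> 'v \<times> 'z"

definition dr_e :: "('v::real_vector, 'z::real_vector) drpt" where
  "dr_e = (0, 0, 0)"

definition dr_mult :: "('v::real_vector \<Rightarrow> 'v \<Rightarrow> 'z::real_vector) \<Rightarrow> ('v,'z) drpt \<Rightarrow> ('v,'z) drpt \<Rightarrow> ('v,'z) drpt" where
  "dr_mult br p q = (case p of (t, V, Z) \<Rightarrow> case q of (t', V', Z') \<Rightarrow>
      (t + t', V + exp (t/2) *\<^sub>R V', Z + exp t *\<^sub>R Z' + (1/2) *\<^sub>R br V (exp (t/2) *\<^sub>R V')))"

definition dr_inv :: "('v::real_vector, 'z::real_vector) drpt \<Rightarrow> ('v,'z) drpt" where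
  "dr_inv p = (case p of (t, V, Z) \<Rightarrow> (- t, - (exp (- t/2) *\<^sub>R V), - (exp (- t) *\<^sub>R Z)))"

definition dr_metric :: "('v::real_inner \<Rightarrow> 'v \<Rightarrow> 'z::real_inner) \<Rightarrow> ('v,'z) drpt \<Rightarrow> ('v,'z) drpt \<Rightarrow> ('v,'z) drpt \<Rightarrow> real" where
  "dr_metric br p \<xi> \<zeta> =
     inner (frechet_derivative (dr_mult br (dr_inv p)) (at p) \<xi>)
           (frechet_derivative (dr_mult br (dr_inv p)) (at p) \<zeta>)"

text \<open>Christoffel symbols of the Levi-Civita connection in the global chart (Koszul formula).\<close>
definition dr_Gamma :: "('v::real_inner \<Rightarrow> 'v \<Rightarrow> 'z::real_inner) \<Rightarrow> ('v,'z) drpt \<Rightarrow> ('v,'z) drpt \<Rightarrow> ('v,'z) drpt \<Rightarrow> ('v,'z) drpt" where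
  "dr_Gamma br p u w = (THE c. \<forall>y. dr_metric br p c y =
      (frechet_derivative (\<lambda>q. dr_metric br q w y) (at p) u
     + frechet_derivative (\<lambda>q. dr_metric br q u y) (at p) w
     - frechet_derivative (\<lambda>q. dr_metric br q u w) (at p) y) / 2)"

definition dr_cov :: "('v::real_inner \<Rightarrow> 'v \<Rightarrow> 'z::real_inner) \<Rightarrow> ('v,'z) drpt \<Rightarrow> ('v,'z) drpt \<Rightarrow> (('v,'z) drpt \<Rightarrow> ('v,'z) drpt) \<Rightarrow> ('v,'z) drpt" where
  "dr_cov br p v Y = frechet_derivative Y (at p) v + dr_Gamma br p v (Y p)"

definition dr_geodesic :: "('v::real_inner \<Rightarrow> 'v \<Rightarrow> 'z::real_inner) \<Rightarrow> (real \<Rightarrow> ('v,'z) drpt) \<Rightarrow> (real \<Rightarrow> ('v,'z) drpt) \<Rightarrow> bool" where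
  "dr_geodesic br \<gamma> \<gamma>' \<longleftrightarrow> (\<forall>t. (\<gamma> has_vector_derivative \<gamma>' t) (at t)) \<and>
     (\<forall>t. (\<gamma>' has_vector_derivative (- dr_Gamma br (\<gamma> t) (\<gamma>' t) (\<gamma>' t))) (at t))"

definition tangent_set :: "('a::real_normed_vector) set \<Rightarrow> 'a \<Rightarrow> 'a set" where
  "tangent_set M p = {v. \<exists>\<gamma>. (\<forall>t. \<gamma> t \<in> M) \<and> \<gamma> 0 = p \<and> (\<gamma> has_vector_derivative v) (at 0)}"

definition dr_subgroup :: "('v::real_vector \<Rightarrow> 'v \<Rightarrow> 'z::real_vector) \<Rightarrow> ('v,'z) drpt set \<Rightarrow> bool" where
  "dr_subgroup br M \<longleftrightarrow> dr_e \<in> M \<and> (\<forall>p\<in>M. \<forall>q\<in>M. dr_mult br p q \<in> M) \<and> (\<forall>p\<in>M. dr_inv p \<in> M)"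

text \<open>Totally geodesic (S is complete): every geodesic tangent to M at a point of M stays in M.\<close>
definition dr_totally_geodesic :: "('v::real_inner \<Rightarrow> 'v \<Rightarrow> 'z::real_inner) \<Rightarrow> ('v,'z) drpt set \<Rightarrow> bool" where
  "dr_totally_geodesic br M \<longleftrightarrow> (\<forall>\<gamma> \<gamma>'. dr_geodesic br \<gamma> \<gamma>' \<and> \<gamma> 0 \<in> M \<and> \<gamma>' 0 \<in> tangent_set M (\<gamma> 0)
      \<longrightarrow> (\<forall>t. \<gamma> t \<in> M))"

text \<open>Killing field induced by Y under left translations: p \<mapsto> d/dt exp(tY) p = (dR_p)_e Y.\<close>
definition dr_killing :: "('v::real_normed_vector \<Rightarrow> 'v \<Rightarrow> 'z::real_normed_vector) \<Rightarrow> ('v,'z) drpt \<Rightarrow> ('v,'z) drpt \<Rightarrow> ('v,'z) drpt" where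
  "dr_killing br Y p = frechet_derivative (\<lambda>q. dr_mult br q p) (at dr_e) Y"

end

(* At the identity the Koszul formula gives the Levi-Civita connection of S explicitly, and the
   Killing field of Y = U + X is p |-> (0, U, X + [U, V_p]/2), with differential delta |-> [U, delta]/2
   at e.  Hence for v = a1 A + W1 + Z1 and w = a2 A + W2 + Z2 in T_e Sigma the number <nabla_v eta, w>
   is -<J_X W1, W2>/2 plus terms involving <U, v'>, <X, z'>, <J_Z1 U, W2> and <[U, W1], Z2>.  The first
   two vanish because Y is orthogonal to T_e Sigma (nothing else about H is used), the last two because
   J_C W lies in v' for W in v' and C in z'.  This inclusion is where total geodesy enters: the geodesic
   of S through e with initial velocity W + C, |W|^2 + |C|^2 = 1, is explicitly
   s |-> (t(s), alpha(s) W + beta(s) J_C W, alpha(s) C).  It stays in Sigma, so translating its velocity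
   at s = 1 back to e gives a vector of T_e Sigma whose v-part has a nonzero J_C W component. *)

theory Submission
  imports Defs
begin

(* Coefficients of the geodesic geo_curve below, with k = |C|^2 = 1 - |W|^2; primes mark
   derivatives in s. *)
definition geo_w :: "real \<Rightarrow> real \<Rightarrow> real" where
  "geo_w k s = ((1 + k) * cosh s + (1 - k)) / 2"
definition geo_t :: "real \<Rightarrow> real \<Rightarrow> real" where
  "geo_t k s = - ln (geo_w k s)"
definition geo_alpha :: "real \<Rightarrow> real \<Rightarrow> real" where
  "geo_alpha k s = sinh s / geo_w k s"
definition geo_beta :: "real \<Rightarrow> real \<Rightarrow> real" where
  "geo_beta k s = (cosh s - 1) / geo_w k s"

definition geo_t' :: "real \<Rightarrow> real \<Rightarrow> real" where
  "geo_t' k s = - (1 + k) * sinh s / (2 * geo_w k s)"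
definition geo_alpha' :: "real \<Rightarrow> real \<Rightarrow> real" where
  "geo_alpha' k s = ((1 + k) + (1 - k) * cosh s) / (2 * (geo_w k s)\<^sup>2)"
definition geo_beta' :: "real \<Rightarrow> real \<Rightarrow> real" where
  "geo_beta' k s = sinh s / (geo_w k s)\<^sup>2"

definition geo_t'' :: "real \<Rightarrow> real \<Rightarrow> real" where
  "geo_t'' k s = - (1 + k) * ((1 + k) + (1 - k) * cosh s) / (4 * (geo_w k s)\<^sup>2)"
definition geo_alpha'' :: "real \<Rightarrow> real \<Rightarrow> real" where
  "geo_alpha'' k s = sinh s * ((1 - k) * geo_w k s - (1 + k) * ((1 + k) + (1 - k) * cosh s))
     / (2 * (geo_w k s) ^ 3)"
definition geo_beta'' :: "real \<Rightarrow> real \<Rightarrow> real" where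
  "geo_beta'' k s = (cosh s * geo_w k s - (1 + k) * (sinh s)\<^sup>2) / (geo_w k s) ^ 3"

lemma geo_w_ge_1:
  assumes "0 \<le> k" shows "1 \<le> geo_w k s"
proof -
  have "(1 + k) * 1 \<le> (1 + k) * cosh s"
    using assms by (intro mult_left_mono cosh_real_ge_1) auto
  then show ?thesis by (simp add: geo_w_def)
qed

lemma DERIV_geo_w: "(geo_w k has_real_derivative (1 + k) * sinh s / 2) (at s)"
  unfolding geo_w_def[abs_def] by (rule derivative_eq_intros refl | simp)+

lemma geo_exp_substitution:
  assumes "0 \<le> k"
  obtains u q where "u \<noteq> 0" "q \<noteq> 0" "q = (1 + k) * u * u + 2 * (1 - k) * u + (1 + k)"
    "cosh s = (u * u + 1) / (2 * u)" "sinh s = (u * u - 1) / (2 * u)" "geo_w k s = q / (4 * u)"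
proof
  define u where "u = exp s"
  have u: "u > 0" "exp (- s) = 1 / u" unfolding u_def by (simp_all add: exp_minus field_simps)
  show "u \<noteq> 0" using u by simp
  show c: "cosh s = (u * u + 1) / (2 * u)"
    unfolding cosh_def using u by (simp add: u_def[symmetric] field_simps)
  show "sinh s = (u * u - 1) / (2 * u)"
    unfolding sinh_def using u by (simp add: u_def[symmetric] field_simps)
  show w: "geo_w k s = ((1 + k) * u * u + 2 * (1 - k) * u + (1 + k)) / (4 * u)"
    unfolding geo_w_def c using u by (simp add: field_simps)
  show "(1 + k) * u * u + 2 * (1 - k) * u + (1 + k) \<noteq> 0"
    using geo_w_ge_1[OF assms, of s] u unfolding w by (auto simp: field_simps)
qed simp

lemma DERIV_geo_t:
  assumes "0 \<le> k" shows "(geo_t k has_real_derivative geo_t' k s) (at s)"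
proof -
  have "0 < geo_w k s" using geo_w_ge_1[OF assms, of s] by simp
  then show ?thesis unfolding geo_t_def[abs_def] geo_t'_def
    by (auto intro!: derivative_eq_intros DERIV_geo_w simp: field_simps)
qed

lemma
  assumes k: "0 \<le> k"
  shows DERIV_geo_alpha: "(geo_alpha k has_real_derivative geo_alpha' k s) (at s)"
    and DERIV_geo_beta: "(geo_beta k has_real_derivative geo_beta' k s) (at s)"
    and DERIV_geo_t': "(geo_t' k has_real_derivative geo_t'' k s) (at s)"
    and DERIV_geo_alpha': "(geo_alpha' k has_real_derivative geo_alpha'' k s) (at s)"
    and DERIV_geo_beta': "(geo_beta' k has_real_derivative geo_beta'' k s) (at s)"
proof -
  obtain u q where uq: "u \<noteq> 0" "q \<noteq> 0" and q: "q = (1 + k) * u * u + 2 * (1 - k) * u + (1 + k)"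
    and subst: "cosh s = (u * u + 1) / (2 * u)" "sinh s = (u * u - 1) / (2 * u)" "geo_w k s = q / (4 * u)"
    using geo_exp_substitution[OF k] .
  have w: "geo_w k s \<noteq> 0" using geo_w_ge_1[OF k, of s] by simp
  show "(geo_alpha k has_real_derivative geo_alpha' k s) (at s)"
    unfolding geo_alpha'_def geo_alpha_def[abs_def] using w
    apply (auto intro!: derivative_eq_intros DERIV_geo_w)
    unfolding subst by (simp add: field_simps uq) (unfold q, algebra)
  show "(geo_beta k has_real_derivative geo_beta' k s) (at s)"
    unfolding geo_beta'_def geo_beta_def[abs_def] using w
    apply (auto intro!: derivative_eq_intros DERIV_geo_w)
    unfolding subst by (simp add: field_simps uq) (unfold q, algebra)
  show "(geo_t' k has_real_derivative geo_t'' k s) (at s)"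
    unfolding geo_t''_def geo_t'_def[abs_def] using w
    apply (auto intro!: derivative_eq_intros DERIV_geo_w)
    unfolding subst by (simp add: field_simps uq) (unfold q, algebra)
  show "(geo_alpha' k has_real_derivative geo_alpha'' k s) (at s)"
    unfolding geo_alpha''_def geo_alpha'_def[abs_def] using w
    apply (auto intro!: derivative_eq_intros DERIV_geo_w)
    unfolding subst by (simp add: field_simps uq) (unfold q, algebra)
  show "(geo_beta' k has_real_derivative geo_beta'' k s) (at s)"
    unfolding geo_beta''_def geo_beta'_def[abs_def] using w
    apply (auto intro!: derivative_eq_intros DERIV_geo_w)
    unfolding subst by (simp add: field_simps uq) (unfold q, algebra)
qed

lemma
  assumes k: "0 \<le> k"
  shows geo_velocity_z_eq: "geo_w k s * (geo_alpha' k s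
      - (1 - k) / 2 * (geo_alpha k s * geo_beta' k s - geo_beta k s * geo_alpha' k s)) = 1 / geo_w k s"
    and geo_t''_eq: "- geo_t'' k s
      = (1 - k) / 2 * geo_w k s * ((geo_alpha' k s)\<^sup>2 + k * (geo_beta' k s)\<^sup>2) + k / (geo_w k s)\<^sup>2"
    and geo_alpha''_eq: "geo_alpha'' k s = geo_t' k s * geo_alpha' k s - k * geo_beta' k s / geo_w k s"
    and geo_beta''_eq: "geo_beta'' k s = geo_t' k s * geo_beta' k s + geo_alpha' k s / geo_w k s"
proof -
  obtain u q where uq: "u \<noteq> 0" "q \<noteq> 0" and q: "q = (1 + k) * u * u + 2 * (1 - k) * u + (1 + k)"
    and subst: "cosh s = (u * u + 1) / (2 * u)" "sinh s = (u * u - 1) / (2 * u)" "geo_w k s = q / (4 * u)"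
    using geo_exp_substitution[OF k] .
  show "geo_w k s * (geo_alpha' k s
      - (1 - k) / 2 * (geo_alpha k s * geo_beta' k s - geo_beta k s * geo_alpha' k s)) = 1 / geo_w k s"
    unfolding geo_alpha_def geo_beta_def geo_alpha'_def geo_beta'_def subst
    by (simp add: field_simps uq) (unfold q, algebra)
  show "- geo_t'' k s
      = (1 - k) / 2 * geo_w k s * ((geo_alpha' k s)\<^sup>2 + k * (geo_beta' k s)\<^sup>2) + k / (geo_w k s)\<^sup>2"
    unfolding geo_t''_def geo_alpha'_def geo_beta'_def subst
    by (simp add: field_simps uq) (unfold q, algebra)
  show "geo_alpha'' k s = geo_t' k s * geo_alpha' k s - k * geo_beta' k s / geo_w k s"
    unfolding geo_alpha''_def geo_t'_def geo_alpha'_def geo_beta'_def subst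
    by (simp add: field_simps uq) (unfold q, algebra)
  show "geo_beta'' k s = geo_t' k s * geo_beta' k s + geo_alpha' k s / geo_w k s"
    unfolding geo_beta''_def geo_t'_def geo_alpha'_def geo_beta'_def subst
    by (simp add: field_simps uq) (unfold q, algebra)
qed

lemma geo_acceleration_z_eq:
  assumes k: "0 \<le> k"
  shows "geo_w k s * (geo_alpha'' k s
      - (1 - k) / 2 * (geo_alpha k s * geo_beta'' k s - geo_beta k s * geo_alpha'' k s))
    = 2 * geo_t' k s / geo_w k s"
proof -
  define F where "F = (\<lambda>s. geo_alpha' k s
      - (1 - k) / 2 * (geo_alpha k s * geo_beta' k s - geo_beta k s * geo_alpha' k s))"
  have w: "0 < geo_w k s" for s using geo_w_ge_1[OF k, of s] by simp
  have "F s = 1 / (geo_w k s)\<^sup>2" for s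
    using geo_velocity_z_eq[OF k, of s] w[of s] unfolding F_def
    by (simp add: field_simps power2_eq_square)
  then have "F = (\<lambda>s. 1 / (geo_w k s)\<^sup>2)" by auto
  then have "(F has_real_derivative - (1 + k) * sinh s / (geo_w k s) ^ 3) (at s)"
    using w[of s]
    by (auto intro!: derivative_eq_intros DERIV_geo_w simp: field_simps power2_eq_square power3_eq_cube)
  moreover have "(F has_real_derivative geo_alpha'' k s
      - (1 - k) / 2 * (geo_alpha k s * geo_beta'' k s - geo_beta k s * geo_alpha'' k s)) (at s)"
    unfolding F_def
    by (rule derivative_eq_intros DERIV_geo_alpha[OF k] DERIV_geo_beta[OF k]
        DERIV_geo_alpha'[OF k] DERIV_geo_beta'[OF k] refl)+ (simp add: algebra_simps)
  ultimately show ?thesis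
    using w[of s] by (auto dest: DERIV_unique simp: geo_t'_def field_simps power3_eq_cube)
qed

lemma has_vector_derivative_span_curve:
  assumes "(f0 has_real_derivative a0) (at s)" "(f1 has_real_derivative a1) (at s)"
    "(f2 has_real_derivative a2) (at s)" "(f3 has_real_derivative a3) (at s)"
  shows "((\<lambda>s. (f0 s, f1 s *\<^sub>R W + f2 s *\<^sub>R W', f3 s *\<^sub>R C)) has_vector_derivative
     (a0, a1 *\<^sub>R W + a2 *\<^sub>R W', a3 *\<^sub>R C)) (at s)"
  using assms unfolding has_real_derivative_iff_has_vector_derivative
  by (intro has_vector_derivative_Pair has_vector_derivative_add
      bounded_linear.has_vector_derivative[OF bounded_linear_scaleR_left])

locale two_step_nilpotent =
  fixes br :: "'v::euclidean_space \<Rightarrow> 'v \<Rightarrow> 'z::euclidean_space"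
  assumes bilinear_br: "bilinear br"
    and br_antisym: "br U V = - br V U"
begin

sublocale br: bounded_bilinear br
  using bilinear_br bilinear_conv_bounded_bilinear by blast

lemma br_self [simp]: "br U U = 0"
  using br_antisym[of U U] by (simp add: eq_neg_iff_add_eq_0 scaleR_2[symmetric])

lemma inner_J: "inner (J br Z U) V = inner (br U V) Z"
proof -
  define W where "W = (\<Sum>b\<in>Basis. inner (br U b) Z *\<^sub>R b)"
  have W: "inner W V = inner (br U V) Z" for V
  proof -
    have "inner W V = (\<Sum>b\<in>Basis. inner (br U b) Z * inner b V)"
      by (simp add: W_def inner_sum_left)
    also have "\<dots> = inner (br U (\<Sum>b\<in>Basis. inner V b *\<^sub>R b)) Z"
      by (simp add: br.sum_right br.scaleR_right inner_sum_left mult.commute inner_commute[of b V for b])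
    finally show ?thesis by (simp add: euclidean_representation)
  qed
  have "J br Z U = W"
    unfolding J_def
  proof (rule the_equality)
    fix W' assume W': "\<forall>V. inner W' V = inner (br U V) Z"
    show "W' = W" by (rule vector_eq_rdot[THEN iffD1]) (simp add: W W')
  qed (simp add: W)
  then show ?thesis using W by simp
qed

lemma J_skew: "inner (J br Z U) V = - inner U (J br Z V)"
  by (simp add: inner_J inner_commute[of U] br_antisym[of V])

lemma inner_J_self [simp]: "inner W (J br C W) = 0"
  using J_skew[of C W W] by (simp add: inner_commute)

lemma J_add_left: "J br (Z1 + Z2) U = J br Z1 U + J br Z2 U"
  by (rule vector_eq_rdot[THEN iffD1]) (simp add: inner_J inner_add_left inner_add_right)

lemma J_add_right: "J br Z (U1 + U2) = J br Z U1 + J br Z U2"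
  by (rule vector_eq_rdot[THEN iffD1]) (simp add: inner_J inner_add_left br.add_left)

lemma J_scaleR_left: "J br (c *\<^sub>R Z) U = c *\<^sub>R J br Z U"
  by (rule vector_eq_rdot[THEN iffD1]) (simp add: inner_J)

lemma J_scaleR_right: "J br Z (c *\<^sub>R U) = c *\<^sub>R J br Z U"
  by (rule vector_eq_rdot[THEN iffD1]) (simp add: inner_J br.scaleR_left)

(* Left translation by p^-1 is affine in the chart, with linear part left_triv p
   (dr_mult_inv_left); thus left_triv p = dL_{p^-1} trivialises T_p S. *)
definition left_triv :: "('v, 'z) drpt \<Rightarrow> ('v, 'z) drpt \<Rightarrow> ('v, 'z) drpt" where
  "left_triv p \<xi> = (fst \<xi>, exp (- fst p / 2) *\<^sub>R fst (snd \<xi>),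
     exp (- fst p) *\<^sub>R (snd (snd \<xi>) - (1/2) *\<^sub>R br (fst (snd p)) (fst (snd \<xi>))))"

lemma dr_mult_inv_left: "dr_mult br (dr_inv p) q = dr_inv p + left_triv p q"
proof -
  obtain t V Z t' V' Z' where "p = (t, V, Z)" "q = (t', V', Z')" by (cases p, cases q) auto
  moreover have "exp (- (t / 2)) * exp (- (t / 2)) = exp (- t)" by (simp add: exp_add[symmetric])
  ultimately show ?thesis
    by (simp add: dr_mult_def dr_inv_def left_triv_def br.scaleR_left br.scaleR_right br.minus_left
        algebra_simps)
qed

lemma dr_mult_inv_self: "dr_mult br (dr_inv p) p = dr_e"
  unfolding dr_mult_inv_left by (cases p) (simp add: dr_inv_def left_triv_def dr_e_def)

lemma bounded_linear_left_triv: "bounded_linear (left_triv p)"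
proof -
  have "linear (left_triv p)"
    by (rule linearI) (simp_all add: left_triv_def br.add_right br.scaleR_right algebra_simps)
  then show ?thesis by (simp add: linear_conv_bounded_linear)
qed

lemma left_triv_eq_0_iff [simp]: "left_triv p x = 0 \<longleftrightarrow> x = 0"
  by (cases x) (auto simp: left_triv_def zero_prod_def br.zero_right)

lemma left_triv_e [simp]: "left_triv dr_e \<xi> = \<xi>"
  by (simp add: left_triv_def dr_e_def br.zero_left)

lemma has_derivative_dr_mult_inv: "(dr_mult br (dr_inv p) has_derivative left_triv p) (at q)"
proof -
  have "dr_mult br (dr_inv p) = (\<lambda>q. left_triv p q + dr_inv p)"
    by (rule ext) (simp add: dr_mult_inv_left add.commute)
  then show ?thesis
    by (simp add: has_derivative_add_const bounded_linear.has_derivative[OF bounded_linear_left_triv]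
        has_derivative_ident)
qed

lemma dr_metric_eq: "dr_metric br p \<xi> \<zeta> = inner (left_triv p \<xi>) (left_triv p \<zeta>)"
  using frechet_derivative_at[OF has_derivative_dr_mult_inv] by (simp add: dr_metric_def)

definition left_triv_deriv :: "('v, 'z) drpt \<Rightarrow> ('v, 'z) drpt \<Rightarrow> ('v, 'z) drpt" where
  "left_triv_deriv \<delta> \<xi> = (0, (- fst \<delta> / 2) *\<^sub>R fst (snd \<xi>),
     (- fst \<delta>) *\<^sub>R snd (snd \<xi>) - (1/2) *\<^sub>R br (fst (snd \<delta>)) (fst (snd \<xi>)))"

lemma has_derivative_left_triv:
  "((\<lambda>p. left_triv p \<xi>) has_derivative (\<lambda>\<delta>. left_triv_deriv (left_triv p \<delta>) (left_triv p \<xi>))) (at p)"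
proof -
  have e: "exp (- (t / 2)) * exp (- (t / 2)) = exp (- t)" for t :: real
    by (simp add: exp_add[symmetric])
  show ?thesis
    unfolding left_triv_def
    apply (rule derivative_eq_intros DERIV_compose_FDERIV[OF DERIV_exp] br.FDERIV | simp)+
    apply (rule ext)
    apply (simp add: left_triv_deriv_def br.zero_right br.scaleR_left br.scaleR_right e algebra_simps)
    done
qed

definition metric_deriv :: "('v, 'z) drpt \<Rightarrow> ('v, 'z) drpt \<Rightarrow> ('v, 'z) drpt \<Rightarrow> real" where
  "metric_deriv \<delta> \<xi> \<zeta> = inner (left_triv_deriv \<delta> \<xi>) \<zeta> + inner \<xi> (left_triv_deriv \<delta> \<zeta>)"

lemma frechet_derivative_dr_metric:
  "frechet_derivative (\<lambda>q. dr_metric br q \<xi> \<zeta>) (at p) \<delta>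
     = metric_deriv (left_triv p \<delta>) (left_triv p \<xi>) (left_triv p \<zeta>)"
proof -
  have "((\<lambda>q. inner (left_triv q \<xi>) (left_triv q \<zeta>)) has_derivative
      (\<lambda>\<delta>. metric_deriv (left_triv p \<delta>) (left_triv p \<xi>) (left_triv p \<zeta>))) (at p)"
    unfolding metric_deriv_def
    by (rule derivative_eq_intros has_derivative_left_triv)+ (simp add: add.commute)
  from frechet_derivative_at[OF this, symmetric] show ?thesis
    by (simp add: dr_metric_eq)
qed

(* The Christoffel symbols at e; by left invariance they determine dr_Gamma everywhere
   (dr_Gamma_eqI). *)
definition christoffel :: "('v, 'z) drpt \<Rightarrow> ('v, 'z) drpt \<Rightarrow> ('v, 'z) drpt" where
  "christoffel f h = ((1/2) * inner (fst (snd f)) (fst (snd h)) + inner (snd (snd f)) (snd (snd h)),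
     - (1/2) *\<^sub>R (fst f *\<^sub>R fst (snd h) + fst h *\<^sub>R fst (snd f))
     - (1/2) *\<^sub>R (J br (snd (snd h)) (fst (snd f)) + J br (snd (snd f)) (fst (snd h))),
     - (fst f *\<^sub>R snd (snd h) + fst h *\<^sub>R snd (snd f)))"

lemma inner_christoffel:
  "inner (christoffel f h) \<eta> = (metric_deriv f h \<eta> + metric_deriv h f \<eta> - metric_deriv \<eta> f h) / 2"
proof -
  obtain a1 W1 Y1 a2 W2 Y2 a3 W3 Y3 where "f = (a1, W1, Y1)" "h = (a2, W2, Y2)" "\<eta> = (a3, W3, Y3)"
    by (cases f, cases h, cases \<eta>) auto
  moreover have "br W3 W1 = - br W1 W3" "br W3 W2 = - br W2 W3" "br W2 W1 = - br W1 W2"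
    using br_antisym by blast+
  moreover have "inner (J br Y2 W1) W3 = inner (br W1 W3) Y2" "inner (J br Y1 W2) W3 = inner (br W2 W3) Y1"
    by (simp_all add: inner_J)
  ultimately show ?thesis
    by (simp add: christoffel_def metric_deriv_def left_triv_deriv_def inner_add_left inner_add_right
        inner_diff_left inner_diff_right br.scaleR_left br.scaleR_right
        inner_commute[of Y2 "br W1 W3"] inner_commute[of Y1 "br W2 W3"] algebra_simps)
qed

lemma dr_Gamma_eqI:
  assumes "left_triv p c = christoffel (left_triv p u) (left_triv p w)"
  shows "dr_Gamma br p u w = c"
  unfolding dr_Gamma_def
proof (rule the_equality)
  let ?Koszul = "\<lambda>y. (frechet_derivative (\<lambda>q. dr_metric br q w y) (at p) u
      + frechet_derivative (\<lambda>q. dr_metric br q u y) (at p) w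
      - frechet_derivative (\<lambda>q. dr_metric br q u w) (at p) y) / 2"
  have Koszul: "?Koszul y = inner (left_triv p c) (left_triv p y)" for y
    by (simp only: frechet_derivative_dr_metric assms inner_christoffel)
  then show "\<forall>y. dr_metric br p c y = ?Koszul y"
    by (simp only: dr_metric_eq) simp
  fix c' assume "\<forall>y. dr_metric br p c' y = ?Koszul y"
  then have "dr_metric br p c' y = inner (left_triv p c) (left_triv p y)" for y
    by (simp only: Koszul)
  then have "inner (left_triv p c') (left_triv p y) = inner (left_triv p c) (left_triv p y)" for y
    by (simp only: dr_metric_eq)
  then have "inner (left_triv p c' - left_triv p c) (left_triv p (c' - c)) = 0"
    by (simp only: inner_diff_left)
  then have "left_triv p (c' - c) = 0"
    by (simp add: linear_diff[OF bounded_linear.linear[OF bounded_linear_left_triv]])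
  then show "c' = c" by simp
qed

lemma dr_Gamma_e: "dr_Gamma br dr_e u w = christoffel u w"
  by (rule dr_Gamma_eqI) simp

lemma dr_killing_eq:
  "dr_killing br (a, V, Z) (t, W, Q) = (a, V + (a / 2) *\<^sub>R W, Z + a *\<^sub>R Q + (1/2) *\<^sub>R br V W)"
proof -
  have "((\<lambda>q. dr_mult br q (t, W, Q)) has_derivative
      (\<lambda>(a, V, Z). (a, V + (a / 2) *\<^sub>R W, Z + a *\<^sub>R Q + (1/2) *\<^sub>R br V W))) (at dr_e)"
  proof -
    have "dr_mult br q (t, W, Q) = (fst q + t, fst (snd q) + exp (fst q / 2) *\<^sub>R W,
        snd (snd q) + exp (fst q) *\<^sub>R Q + (1/2) *\<^sub>R br (fst (snd q)) (exp (fst q / 2) *\<^sub>R W))" for q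
      by (cases q) (simp add: dr_mult_def)
    then show ?thesis
      unfolding dr_e_def
      apply simp
      apply (rule derivative_eq_intros DERIV_compose_FDERIV[OF DERIV_exp] br.FDERIV | simp)+
      apply (rule ext)
      apply (auto simp: br.zero_left br.scaleR_right algebra_simps)
      done
  qed
  from frechet_derivative_at[OF this, symmetric] show ?thesis
    by (simp add: dr_killing_def)
qed

lemma dr_killing_e [simp]: "dr_killing br Y dr_e = Y"
  by (cases Y) (simp add: dr_e_def dr_killing_eq br.zero_right)

lemma dr_cov_killing_e:
  "dr_cov br dr_e (a, W, Z) (dr_killing br (0, U, X)) =
    (inner W U / 2 + inner Z X, - (a / 2) *\<^sub>R U - (1/2) *\<^sub>R (J br X W + J br Z U),
     - a *\<^sub>R X + (1/2) *\<^sub>R br U W)"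
proof -
  have "dr_killing br (0, U, X) = (\<lambda>p. (0, U, X + (1/2) *\<^sub>R br U (fst (snd p))))"
    by (auto simp: dr_killing_eq)
  moreover have "((\<lambda>p. (0, U, X + (1/2) *\<^sub>R br U (fst (snd p)))) has_derivative
      (\<lambda>\<delta>. (0, 0, (1/2) *\<^sub>R br U (fst (snd \<delta>))))) (at dr_e)"
    by (rule derivative_eq_intros br.FDERIV | simp)+ (auto simp: br.zero_left br.zero_right)
  ultimately have "frechet_derivative (dr_killing br (0, U, X)) (at dr_e)
      = (\<lambda>\<delta>. (0, 0, (1/2) *\<^sub>R br U (fst (snd \<delta>))))"
    using frechet_derivative_at by metis
  then show ?thesis
    by (simp add: dr_cov_def dr_Gamma_e christoffel_def dr_killing_e algebra_simps)
qed

lemma inner_dr_cov_killing_e: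
  assumes J_mem: "\<And>W C. W \<in> v' \<Longrightarrow> C \<in> z' \<Longrightarrow> J br C W \<in> v'"
    and U: "\<And>W. W \<in> v' \<Longrightarrow> inner U W = 0" and X: "\<And>Z. Z \<in> z' \<Longrightarrow> inner X Z = 0"
    and "W1 \<in> v'" "Z1 \<in> z'" "W2 \<in> v'" "Z2 \<in> z'"
  shows "inner (dr_cov br dr_e (a1, W1, Z1) (dr_killing br (0, U, X))) (a2, W2, Z2)
    = - inner (J br X W1) W2 / 2"
proof -
  have "inner U W1 = 0" "inner U W2 = 0" "inner X Z1 = 0" "inner X Z2 = 0"
    using assms by simp_all
  moreover have "inner (J br Z1 U) W2 = 0"
    using J_skew[of Z1 U W2] U[OF J_mem[of W2 Z1]] assms by simp
  moreover have "inner (br U W1) Z2 = 0"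
    using inner_J[of Z2 U W1] J_skew[of Z2 U W1] U[OF J_mem[of W1 Z2]] assms by simp
  ultimately show ?thesis
    by (simp add: dr_cov_killing_e inner_add_left inner_diff_left inner_commute[of W1 U]
        inner_commute[of Z1 X] algebra_simps)
qed

lemma left_triv_tangent_set:
  assumes "dr_subgroup br \<Sigma>" "\<And>s. \<gamma> s \<in> \<Sigma>" "(\<gamma> has_vector_derivative v) (at s)"
  shows "left_triv (\<gamma> s) v \<in> tangent_set \<Sigma> dr_e"
proof -
  define c where "c r = dr_mult br (dr_inv (\<gamma> s)) (\<gamma> (s + r))" for r
  have "c r \<in> \<Sigma>" for r
    using assms unfolding c_def dr_subgroup_def by blast
  moreover have "c 0 = dr_e"
    by (simp add: c_def dr_mult_inv_self)
  moreover have "((\<lambda>r. s + r) has_vector_derivative 1) (at 0)"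
    by (rule derivative_eq_intros refl | simp)+
  then have "((\<lambda>r. \<gamma> (s + r)) has_vector_derivative v) (at 0)"
    using vector_diff_chain_at[of "\<lambda>r. s + r" 1 0 \<gamma> v] assms(3) by (simp add: o_def)
  then have "(c has_vector_derivative left_triv (\<gamma> s) v) (at 0)"
    unfolding c_def dr_mult_inv_left add.commute[of "dr_inv (\<gamma> s)"] has_vector_derivative_add_const
    by (rule bounded_linear.has_vector_derivative[OF bounded_linear_left_triv])
  ultimately show ?thesis
    unfolding tangent_set_def by blast
qed

end

locale damek_ricci_space = two_step_nilpotent br
  for br :: "'v::euclidean_space \<Rightarrow> 'v \<Rightarrow> 'z::euclidean_space" +
  assumes J_J: "J br Z (J br Z U) = - inner Z Z *\<^sub>R U"
begin

lemma J_anticomm: "J br Z (J br C W) + J br C (J br Z W) = - (2 * inner Z C) *\<^sub>R W"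
proof -
  have "J br (Z + C) (J br (Z + C) W) = - inner (Z + C) (Z + C) *\<^sub>R W" by (rule J_J)
  then have "J br Z (J br Z W) + J br Z (J br C W) + J br C (J br Z W) + J br C (J br C W)
     = - (inner Z Z + 2 * inner Z C + inner C C) *\<^sub>R W"
    by (simp add: J_add_left J_add_right inner_add_left inner_add_right inner_commute algebra_simps)
  then have "J br C (J br Z W) + (J br Z (J br C W) + (2 * inner Z C) *\<^sub>R W) = 0"
    by (simp add: J_J algebra_simps)
  then show ?thesis by (simp add: eq_neg_iff_add_eq_0 add_ac)
qed

lemma inner_J_J: "inner (J br Z W) (J br C W) = inner Z C * inner W W"
proof -
  have "inner (J br Z W) (J br C W) = - inner W (J br Z (J br C W))" by (rule J_skew)
  also have "J br Z (J br C W) = - (2 * inner Z C) *\<^sub>R W - J br C (J br Z W)"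
    using J_anticomm[of Z C W] by (simp add: algebra_simps)
  finally have "inner (J br Z W) (J br C W) = 2 * inner Z C * inner W W + inner W (J br C (J br Z W))"
    by (simp add: inner_diff_right)
  also have "inner W (J br C (J br Z W)) = - inner (J br C W) (J br Z W)"
    using J_skew[of C W "J br Z W"] by simp
  finally show ?thesis by (simp add: inner_commute)
qed

lemma br_J: "br W (J br C W) = inner W W *\<^sub>R C"
proof (rule vector_eq_rdot[THEN iffD1], rule allI)
  fix V
  have "inner (br W (J br C W)) V = inner (J br V W) (J br C W)" by (simp add: inner_J)
  then show "inner (br W (J br C W)) V = inner (inner W W *\<^sub>R C) V"
    by (simp add: inner_J_J inner_commute[of V])
qed

lemma br_span:
  "br (a *\<^sub>R W + b *\<^sub>R J br C W) (x *\<^sub>R W + y *\<^sub>R J br C W) = ((a * y - b * x) * inner W W) *\<^sub>R C"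
proof -
  have "br (J br C W) W = - (inner W W *\<^sub>R C)" using br_antisym[of "J br C W" W] br_J by simp
  then show ?thesis
    by (simp add: br.add_left br.add_right br.scaleR_left br.scaleR_right br_J algebra_simps)
qed

lemma left_triv_span:
  "left_triv (t, a *\<^sub>R W + b *\<^sub>R J br C W, c *\<^sub>R C) (d, x *\<^sub>R W + y *\<^sub>R J br C W, z *\<^sub>R C)
    = (d, (exp (- t / 2) * x) *\<^sub>R W + (exp (- t / 2) * y) *\<^sub>R J br C W,
       (exp (- t) * (z - (1/2) * ((a * y - b * x) * inner W W))) *\<^sub>R C)"
  by (simp add: left_triv_def br_span algebra_simps)

lemma christoffel_span:
  "christoffel (d, x *\<^sub>R W + y *\<^sub>R J br C W, z *\<^sub>R C) (d, x *\<^sub>R W + y *\<^sub>R J br C W, z *\<^sub>R C)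
    = (inner W W * (x * x + inner C C * (y * y)) / 2 + z * z * inner C C,
       (- d * x + z * y * inner C C) *\<^sub>R W + (- d * y - z * x) *\<^sub>R J br C W,
       (- 2 * d * z) *\<^sub>R C)"
proof -
  have "J br (z *\<^sub>R C) (x *\<^sub>R W + y *\<^sub>R J br C W) = (- z * y * inner C C) *\<^sub>R W + (z * x) *\<^sub>R J br C W"
    by (simp add: J_add_right J_scaleR_left J_scaleR_right J_J algebra_simps)
  moreover have "inner (J br C W) (J br C W) = inner C C * inner W W"
    by (rule inner_J_J)
  moreover have "inner (J br C W) W = 0"
    using inner_J_self[of W C] by (simp add: inner_commute)
  ultimately show ?thesis
    by (simp add: christoffel_def inner_add_left inner_add_right algebra_simps scaleR_2[symmetric])
qed

definition geo_curve :: "'v \<Rightarrow> 'z \<Rightarrow> real \<Rightarrow> ('v, 'z) drpt" where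
  "geo_curve W C s = (geo_t (inner C C) s,
     geo_alpha (inner C C) s *\<^sub>R W + geo_beta (inner C C) s *\<^sub>R J br C W, geo_alpha (inner C C) s *\<^sub>R C)"

definition geo_velocity :: "'v \<Rightarrow> 'z \<Rightarrow> real \<Rightarrow> ('v, 'z) drpt" where
  "geo_velocity W C s = (geo_t' (inner C C) s,
     geo_alpha' (inner C C) s *\<^sub>R W + geo_beta' (inner C C) s *\<^sub>R J br C W, geo_alpha' (inner C C) s *\<^sub>R C)"

definition geo_accel :: "'v \<Rightarrow> 'z \<Rightarrow> real \<Rightarrow> ('v, 'z) drpt" where
  "geo_accel W C s = (geo_t'' (inner C C) s,
     geo_alpha'' (inner C C) s *\<^sub>R W + geo_beta'' (inner C C) s *\<^sub>R J br C W, geo_alpha'' (inner C C) s *\<^sub>R C)"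

lemma has_vector_derivative_geo_curve: "(geo_curve W C has_vector_derivative geo_velocity W C s) (at s)"
  unfolding geo_curve_def[abs_def] geo_velocity_def
  by (intro has_vector_derivative_span_curve DERIV_geo_t DERIV_geo_alpha DERIV_geo_beta) simp_all

lemma has_vector_derivative_geo_velocity: "(geo_velocity W C has_vector_derivative geo_accel W C s) (at s)"
  unfolding geo_velocity_def[abs_def] geo_accel_def
  by (intro has_vector_derivative_span_curve DERIV_geo_t' DERIV_geo_alpha' DERIV_geo_beta') simp_all

lemma dr_Gamma_geo_curve:
  assumes unit: "inner W W + inner C C = 1"
  shows "dr_Gamma br (geo_curve W C s) (geo_velocity W C s) (geo_velocity W C s) = - geo_accel W C s"
proof (rule dr_Gamma_eqI)
  define k where "k = inner C C"
  define w where "w = geo_w k s"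
  define E where "E = sqrt w"
  have k: "0 \<le> k" and W: "inner W W = 1 - k" using unit by (simp_all add: k_def)
  have w: "0 < w" using geo_w_ge_1[OF k, of s] by (simp add: w_def)
  have E: "E * E = w" "exp (- geo_t k s / 2) = E" "exp (- geo_t k s) = w"
    using w powr_half_sqrt[of w] by (simp_all add: E_def geo_t_def w_def powr_def)
  have vel: "left_triv (geo_curve W C s) (geo_velocity W C s) =
      (geo_t' k s, (E * geo_alpha' k s) *\<^sub>R W + (E * geo_beta' k s) *\<^sub>R J br C W, (1 / w) *\<^sub>R C)"
  proof -
    have "w * (geo_alpha' k s - 1/2 * ((geo_alpha k s * geo_beta' k s - geo_beta k s * geo_alpha' k s) * (1 - k)))
        = 1 / w"
      using geo_velocity_z_eq[OF k, of s] w by (simp add: w_def field_simps)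
    then show ?thesis
      unfolding geo_curve_def geo_velocity_def left_triv_span k_def[symmetric] W E by simp
  qed
  have acc: "left_triv (geo_curve W C s) (- geo_accel W C s) =
      (- geo_t'' k s, (- E * geo_alpha'' k s) *\<^sub>R W + (- E * geo_beta'' k s) *\<^sub>R J br C W,
       (- 2 * geo_t' k s / w) *\<^sub>R C)"
  proof -
    have neg: "- geo_accel W C s = (- geo_t'' k s,
        (- geo_alpha'' k s) *\<^sub>R W + (- geo_beta'' k s) *\<^sub>R J br C W, (- geo_alpha'' k s) *\<^sub>R C)"
      by (simp add: geo_accel_def k_def)
    have "w * (- geo_alpha'' k s - 1/2 * ((geo_alpha k s * - geo_beta'' k s
        - geo_beta k s * - geo_alpha'' k s) * (1 - k))) = - 2 * geo_t' k s / w"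
      using geo_acceleration_z_eq[OF k, of s] w by (simp add: w_def field_simps)
    then show ?thesis
      unfolding neg geo_curve_def left_triv_span k_def[symmetric] W E by simp
  qed
  have "- geo_t'' k s = (1 - k) * (E * geo_alpha' k s * (E * geo_alpha' k s)
      + k * (E * geo_beta' k s * (E * geo_beta' k s))) / 2 + 1 / w * (1 / w) * k"
  proof -
    have EE: "E * a * (E * b) = w * (a * b)" for a b by (simp add: E(1)[symmetric] ac_simps)
    show ?thesis
      unfolding EE using geo_t''_eq[OF k, of s] w by (simp add: w_def power2_eq_square field_simps)
  qed
  moreover have "- E * geo_alpha'' k s = - geo_t' k s * (E * geo_alpha' k s) + 1 / w * (E * geo_beta' k s) * k"
    unfolding geo_alpha''_eq[OF k] using w by (simp add: w_def field_simps)
  moreover have "- E * geo_beta'' k s = - geo_t' k s * (E * geo_beta' k s) - 1 / w * (E * geo_alpha' k s)"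
    unfolding geo_beta''_eq[OF k] using w by (simp add: w_def field_simps)
  ultimately show "left_triv (geo_curve W C s) (- geo_accel W C s) = christoffel
      (left_triv (geo_curve W C s) (geo_velocity W C s)) (left_triv (geo_curve W C s) (geo_velocity W C s))"
    unfolding vel acc christoffel_span W k_def[symmetric] by simp
qed

lemma dr_geodesic_geo_curve:
  "inner W W + inner C C = 1 \<Longrightarrow> dr_geodesic br (geo_curve W C) (geo_velocity W C)"
  unfolding dr_geodesic_def
  by (simp add: has_vector_derivative_geo_curve has_vector_derivative_geo_velocity dr_Gamma_geo_curve)

lemma geo_curve_0: "geo_curve W C 0 = dr_e"
  by (simp add: geo_curve_def dr_e_def geo_t_def geo_alpha_def geo_beta_def geo_w_def)

lemma geo_velocity_0: "geo_velocity W C 0 = (0, W, C)"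
  by (simp add: geo_velocity_def geo_t'_def geo_alpha'_def geo_beta'_def geo_w_def)

lemma J_mem_of_totally_geodesic_unit:
  assumes "subspace v'" "dr_subgroup br \<Sigma>" "dr_totally_geodesic br \<Sigma>"
    and tan: "tangent_set \<Sigma> dr_e = {(a, V, Z) | a V Z. V \<in> v' \<and> Z \<in> z'}"
    and "W \<in> v'" "C \<in> z'" and unit: "inner W W + inner C C = 1"
  shows "J br C W \<in> v'"
proof -
  define k where "k = inner C C"
  have k: "0 \<le> k" by (simp add: k_def)
  have "dr_e \<in> \<Sigma>" "geo_velocity W C 0 \<in> tangent_set \<Sigma> dr_e"
    using assms by (simp_all add: dr_subgroup_def geo_velocity_0)
  then have geodesic_in: "geo_curve W C s \<in> \<Sigma>" for s
    using dr_totally_geodesic_def[THEN iffD1, rule_format, OF assms(3)] dr_geodesic_geo_curve[OF unit]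
    by (simp add: geo_curve_0)
  have "left_triv (geo_curve W C 1) (geo_velocity W C 1) \<in> tangent_set \<Sigma> dr_e"
    by (rule left_triv_tangent_set[OF assms(2) geodesic_in has_vector_derivative_geo_curve])
  then have "exp (- geo_t k 1 / 2) *\<^sub>R (geo_alpha' k 1 *\<^sub>R W + geo_beta' k 1 *\<^sub>R J br C W) \<in> v'"
    by (simp add: tan left_triv_def geo_curve_def geo_velocity_def k_def)
  then have "exp (geo_t k 1 / 2) *\<^sub>R exp (- geo_t k 1 / 2) *\<^sub>R
      (geo_alpha' k 1 *\<^sub>R W + geo_beta' k 1 *\<^sub>R J br C W) \<in> v'"
    using \<open>subspace v'\<close> by (rule subspace_scale[rotated])
  then have "geo_alpha' k 1 *\<^sub>R W + geo_beta' k 1 *\<^sub>R J br C W \<in> v'"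
    by (simp add: exp_add[symmetric])
  then have "(geo_alpha' k 1 *\<^sub>R W + geo_beta' k 1 *\<^sub>R J br C W) - geo_alpha' k 1 *\<^sub>R W \<in> v'"
    using assms by (intro subspace_diff subspace_scale)
  then have "geo_beta' k 1 *\<^sub>R J br C W \<in> v'" by simp
  moreover have "geo_beta' k 1 \<noteq> 0"
    using geo_w_ge_1[OF k, of 1] by (simp add: geo_beta'_def)
  ultimately show ?thesis
    using subspace_scale[OF \<open>subspace v'\<close>, of "geo_beta' k 1 *\<^sub>R J br C W" "1 / geo_beta' k 1"]
    by simp
qed

lemma J_mem_of_totally_geodesic:
  assumes "subspace v'" "subspace z'" "dr_subgroup br \<Sigma>" "dr_totally_geodesic br \<Sigma>"
    and "tangent_set \<Sigma> dr_e = {(a, V, Z) | a V Z. V \<in> v' \<and> Z \<in> z'}"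
    and W: "W \<in> v'" and C: "C \<in> z'"
  shows "J br C W \<in> v'"
proof (cases "W = 0 \<or> C = 0")
  case True
  then show ?thesis
    using J_scaleR_left[of 0 C W] J_scaleR_right[of C 0 W] \<open>subspace v'\<close> by (auto simp: subspace_0)
next
  case False
  define a where "a = 1 / (sqrt 2 * norm W)"
  define b where "b = 1 / (sqrt 2 * norm C)"
  have "a \<noteq> 0" "b \<noteq> 0" using False by (simp_all add: a_def b_def)
  have "inner (a *\<^sub>R W) (a *\<^sub>R W) + inner (b *\<^sub>R C) (b *\<^sub>R C) = 1"
    using False by (simp add: a_def b_def power2_norm_eq_inner[symmetric] power_divide)
  moreover have "a *\<^sub>R W \<in> v'" "b *\<^sub>R C \<in> z'"
    using assms by (simp_all add: subspace_scale)
  ultimately have "J br (b *\<^sub>R C) (a *\<^sub>R W) \<in> v'"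
    using assms by (intro J_mem_of_totally_geodesic_unit[where \<Sigma> = \<Sigma> and z' = z'])
  then have "(a * b) *\<^sub>R J br C W \<in> v'"
    by (simp add: J_scaleR_left J_scaleR_right)
  then have "(1 / (a * b)) *\<^sub>R (a * b) *\<^sub>R J br C W \<in> v'"
    using \<open>subspace v'\<close> by (rule subspace_scale[rotated])
  with \<open>a \<noteq> 0\<close> \<open>b \<noteq> 0\<close> show ?thesis by simp
qed

end

lemma damek_ricci_spaceI: "damek_ricci br \<Longrightarrow> damek_ricci_space br"
  unfolding damek_ricci_def by unfold_locales blast+

theorem lemma3p3:
  fixes br :: "'v::euclidean_space \<Rightarrow> 'v \<Rightarrow> 'z::euclidean_space"
    and \<Sigma> H :: "('v,'z) drpt set"
    and v' :: "'v set" and z' :: "'z set"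
    and Y :: "('v,'z) drpt" and U :: 'v and X :: 'z
  assumes DR: "damek_ricci br"
    and sub_v: "subspace v'" and sub_z: "subspace z'"
    and Sigma_grp: "dr_subgroup br \<Sigma>"
    and Sigma_tg: "dr_totally_geodesic br \<Sigma>"
    and Sigma_tan: "tangent_set \<Sigma> dr_e = {(a, V, Z) | a V Z. V \<in> v' \<and> Z \<in> z'}"
    and H_grp: "dr_subgroup br H" and H_closed: "closed H"
    and h_orth: "\<forall>W1\<in>tangent_set H dr_e. \<forall>W2\<in>tangent_set \<Sigma> dr_e. inner W1 W2 = 0"
    and Y_h: "Y \<in> tangent_set H dr_e"
    and eta_e: "dr_killing br Y dr_e = (0, U, X)"
  shows "(\<forall>v\<in>tangent_set \<Sigma> dr_e. \<forall>w\<in>tangent_set \<Sigma> dr_e.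
            inner (dr_cov br dr_e v (dr_killing br Y)) w = 0)
     \<longleftrightarrow> (\<forall>u\<in>v'. \<forall>w\<in>v'. inner (J br X u) w = 0)"
proof -
  interpret damek_ricci_space br using DR by (rule damek_ricci_spaceI)
  have Y: "Y = (0, U, X)" using eta_e by simp
  have Y_orth: "inner U W + inner X Z = 0" if "W \<in> v'" "Z \<in> z'" for W Z
    using h_orth Y_h that by (auto simp: Sigma_tan Y)
  have U: "inner U W = 0" if "W \<in> v'" for W
    using Y_orth[OF that subspace_0[OF sub_z]] by simp
  have X: "inner X Z = 0" if "Z \<in> z'" for Z
    using Y_orth[OF subspace_0[OF sub_v] that] by simp
  have J_mem: "J br C W \<in> v'" if "W \<in> v'" "C \<in> z'" for W C
    using J_mem_of_totally_geodesic[OF sub_v sub_z Sigma_grp Sigma_tg Sigma_tan that] .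
  have "inner (dr_cov br dr_e (a1, W1, Z1) (dr_killing br Y)) (a2, W2, Z2) = - inner (J br X W1) W2 / 2"
    if "W1 \<in> v'" "Z1 \<in> z'" "W2 \<in> v'" "Z2 \<in> z'" for a1 W1 Z1 a2 W2 Z2
    unfolding Y using J_mem U X that by (rule inner_dr_cov_killing_e)
  then show ?thesis
    unfolding Sigma_tan using subspace_0[OF sub_z] by fastforce
qed

end
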